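(* Suppose A1–A3 hold and let $\{x_k\}$ be generated by Algorithm 1. If $\nu_k\to0$ as $k\to\infty$, then either there exists $\bar k$ with $\nabla f(x_{\bar k})=0$, or $\liminf_{k\to\infty}\|\nabla f(x_k)\|=0$. (More precisely, $\lim_{T\to\infty}\min_{k=0,\dots,T-1}\|\nabla f(x_k)\|=0$.)
   Context: Let $(X,\langle\cdot,\cdot\rangle)$ be a real Hilbert space with induced norm $\|\cdot\|$, and $f:X\to\mathbb{R}$ Fréchet differentiable with gradient $\nabla f$. Algorithm 1 (general non-monotone descent algorithm): parameters $x_0\in X$, $\alpha_0>0$, $\beta,\rho\in(0,1)$. For $k=0,1,2,\dots$: choose $d_k\in X$ with $\langle\nabla f(x_k),d_k\rangle<0$; then for $l=0,1,2,\dots$ choose a number $\nu_{k,l}\ge 0$ and test $$f(x_k+\alpha_k\beta^l d_k)\le f(x_k)+\rho\alpha_k\beta^l\langle\nabla f(x_k),d_k\rangle+\nu_{k,l};$$ let $l_k$ be the first $l$ for which this holds, set $\nu_k:=\nu_{k,l_k}$, $x_{k+1}=x_k+\alpha_k\beta^{l_k}d_k$ and $\alpha_{k+1}=\alpha_k\beta^{l_k-1}$. It is assumed the algorithm generates infinite sequences (all $l_k$ finite). Assumptions: A1: $\nabla f$ is Lipschitz continuous with constant $L>0$. A2: there is $f_{low}\in\mathbb{R}$ with $f(x)\ge f_{low}$ for all $x\in X$. A3: there are constants $c_1,c_2>0$ with $\langle\nabla f(x_k),d_k\rangle\le -c_1\|\nabla f(x_k)\|^2$ and $\|d_k\|\le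 c_2\|\nabla f(x_k)\|$ for all $k$. *)

theory Defs
  imports "HOL-Analysis.Analysis"
begin

end

(*
  A Lipschitz gradient makes the Armijo test hold, even with \<nu> = 0, for every trial step
  below (1 - \<rho>) c1 / (L c2^2). Since each new trial step is the last accepted one divided
  by \<beta>, accepted steps stay above a constant \<tau> > 0, so every iteration decreases f by at
  least \<rho> \<tau> c1 \<parallel>\<nabla>f(x_k)\<parallel>^2 up to the error \<nu>_k. As f is bounded below and \<nu>_k \<rightarrow> 0,
  the gradient norms cannot stay above any \<epsilon> > 0.
*)

theory Submission
  imports Defs
begin

lemma lipschitz_gradient_upper_bound:
  fixes f :: "'a::real_inner \<Rightarrow> real" and g :: "'a \<Rightarrow> 'a"
  assumes grad: "\<And>y. (f has_derivative (\<lambda>h. inner (g y) h)) (at y)"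
    and lip: "L-lipschitz_on UNIV g" and t: "t > 0"
  shows "f (y + t *\<^sub>R h) \<le> f y + t * inner (g y) h + L * t\<^sup>2 * (norm h)\<^sup>2"
proof -
  have deriv: "((\<lambda>s. f (y + s *\<^sub>R h)) has_real_derivative inner (g (y + s *\<^sub>R h)) h) (at s)" for s
  proof -
    have "((\<lambda>s. y + s *\<^sub>R h) has_derivative (\<lambda>s. s *\<^sub>R h)) (at s)"
      by (auto intro!: derivative_eq_intros)
    from has_derivative_compose[OF this grad]
    have "((\<lambda>s. f (y + s *\<^sub>R h)) has_derivative (\<lambda>r. inner (g (y + s *\<^sub>R h)) (r *\<^sub>R h))) (at s)" .
    moreover have "(\<lambda>r. inner (g (y + s *\<^sub>R h)) (r *\<^sub>R h)) = (*) (inner (g (y + s *\<^sub>R h)) h)"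
      by (auto simp: mult.commute)
    ultimately show ?thesis by (simp add: has_field_derivative_def)
  qed
  obtain z where z: "0 < z" "z < t"
    and "f (y + t *\<^sub>R h) - f (y + 0 *\<^sub>R h) = (t - 0) * inner (g (y + z *\<^sub>R h)) h"
    using MVT2[of 0 t "\<lambda>s. f (y + s *\<^sub>R h)" "\<lambda>s. inner (g (y + s *\<^sub>R h)) h"] t deriv
    by blast
  then have mvt: "f (y + t *\<^sub>R h) - f y = t * inner (g (y + z *\<^sub>R h)) h" by simp
  have "L \<ge> 0" using lip lipschitz_on_nonneg by blast
  have "inner (g (y + z *\<^sub>R h)) h - inner (g y) h = inner (g (y + z *\<^sub>R h) - g y) h"
    by (simp add: inner_diff_left)
  also have "\<dots> \<le> norm (g (y + z *\<^sub>R h) - g y) * norm h" by (rule norm_cauchy_schwarz)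
  also have "\<dots> \<le> L * norm (z *\<^sub>R h) * norm h"
    using lipschitz_onD[OF lip, of "y + z *\<^sub>R h" y]
    by (intro mult_right_mono) (simp_all add: dist_norm)
  also have "\<dots> = L * z * (norm h)\<^sup>2" using z by (simp add: power2_eq_square)
  also have "\<dots> \<le> L * t * (norm h)\<^sup>2"
    using z \<open>L \<ge> 0\<close> by (intro mult_right_mono mult_left_mono) auto
  finally have "inner (g (y + z *\<^sub>R h)) h \<le> inner (g y) h + L * t * (norm h)\<^sup>2" by simp
  then have "t * inner (g (y + z *\<^sub>R h)) h \<le> t * (inner (g y) h + L * t * (norm h)\<^sup>2)"
    using t by (intro mult_left_mono) simp_all
  with mvt show ?thesis by (simp add: algebra_simps power2_eq_square)
qed

lemma armijo_condition_for_short_steps: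
  fixes f :: "'a::real_inner \<Rightarrow> real" and g :: "'a \<Rightarrow> 'a"
  assumes grad: "\<And>y. (f has_derivative (\<lambda>h. inner (g y) h)) (at y)"
    and lip: "L-lipschitz_on UNIV g" and "L > 0" "\<rho> < 1" "c2 > 0"
    and s: "0 < s" "s \<le> (1 - \<rho>) * c1 / (L * c2\<^sup>2)"
    and angle: "inner (g y) h \<le> - c1 * (norm (g y))\<^sup>2"
    and length: "norm h \<le> c2 * norm (g y)"
  shows "f (y + s *\<^sub>R h) \<le> f y + \<rho> * s * inner (g y) h"
proof -
  define C where "C = (1 - \<rho>) * c1 / (L * c2\<^sup>2)"
  have "s \<le> C" using s(2) unfolding C_def .
  have "L * C * c2\<^sup>2 = (1 - \<rho>) * c1" using \<open>L > 0\<close> \<open>c2 > 0\<close> by (simp add: C_def)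
  have "(norm h)\<^sup>2 \<le> c2\<^sup>2 * (norm (g y))\<^sup>2"
    using length by (simp add: power_mult_distrib[symmetric] power_mono)
  then have "L * s * (norm h)\<^sup>2 \<le> L * C * (c2\<^sup>2 * (norm (g y))\<^sup>2)"
    using s \<open>s \<le> C\<close> \<open>L > 0\<close> by (intro mult_mono) auto
  also have "\<dots> = (L * C * c2\<^sup>2) * (norm (g y))\<^sup>2" by (simp add: ac_simps)
  also have "\<dots> = (1 - \<rho>) * (c1 * (norm (g y))\<^sup>2)" using \<open>L * C * c2\<^sup>2 = _\<close> by simp
  also have "\<dots> \<le> (1 - \<rho>) * (- inner (g y) h)"
    using angle \<open>\<rho> < 1\<close> by (intro mult_left_mono) auto
  finally have "s * (L * s * (norm h)\<^sup>2) \<le> s * ((1 - \<rho>) * (- inner (g y) h))"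
    using s by (intro mult_left_mono) auto
  then have "s * inner (g y) h + L * s\<^sup>2 * (norm h)\<^sup>2 \<le> \<rho> * s * inner (g y) h"
    by (simp add: algebra_simps power2_eq_square)
  with lipschitz_gradient_upper_bound[OF grad lip s(1), of y h] show ?thesis by linarith
qed

text \<open>With \<open>\<alpha>\<^sub>k\<^sub>+\<^sub>1 = \<alpha>\<^sub>k \<beta>\<^bsup>l\<^sub>k\<^esup> / \<beta>\<close> the accepted step is either at least the previous one
  (when \<open>l\<^sub>k = 0\<close>) or a rejected step times \<open>\<beta>\<close>.\<close>

lemma backtracking_steps_bounded_below:
  fixes \<alpha> :: "nat \<Rightarrow> real" and l :: "nat \<Rightarrow> nat"
  assumes "0 < \<beta>" "\<beta> < 1" "\<alpha> 0 > 0" "c > 0"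
    and next_trial: "\<And>k. \<alpha> (Suc k) = \<alpha> k * \<beta> ^ l k / \<beta>"
    and rejected: "\<And>k. 0 < l k \<Longrightarrow> \<beta> * c < \<alpha> k * \<beta> ^ l k"
  shows "min (\<alpha> 0) (\<beta> * c) \<le> \<alpha> k * \<beta> ^ l k"
proof (induction k)
  case 0
  show ?case using rejected[of 0] by (cases "l 0") auto
next
  case (Suc k)
  have "min (\<alpha> 0) (\<beta> * c) > 0" using assms by simp
  with Suc have "\<alpha> k * \<beta> ^ l k > 0" by linarith
  then have "\<alpha> k * \<beta> ^ l k \<le> \<alpha> k * \<beta> ^ l k / \<beta>"
    using \<open>0 < \<beta>\<close> \<open>\<beta> < 1\<close> by (simp add: le_divide_eq mult_left_le)
  with Suc show ?case
    using rejected[of "Suc k"] next_trial[of k] by (cases "l (Suc k)") auto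
qed

lemma frequently_small_if_descent_bounded_below:
  fixes a b \<nu> :: "nat \<Rightarrow> real"
  assumes descent: "\<And>k. a (Suc k) \<le> a k - b k + \<nu> k"
    and "\<nu> \<longlonglongrightarrow> 0" and bounded: "\<And>k. m \<le> a k" and "e > 0"
  shows "frequently (\<lambda>k. b k < e) sequentially"
proof (rule ccontr)
  assume "\<not> ?thesis"
  then have "eventually (\<lambda>k. \<not> b k < e) sequentially"
    by (simp add: not_frequently)
  moreover have "eventually (\<lambda>k. \<nu> k < e / 2) sequentially"
    using order_tendstoD(2)[OF \<open>\<nu> \<longlonglongrightarrow> 0\<close>, of "e / 2"] \<open>e > 0\<close> by simp
  ultimately have "eventually (\<lambda>k. a (Suc k) \<le> a k - e / 2) sequentially"
  proof eventually_elim
    case (elim k)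
    then show ?case using descent[of k] by linarith
  qed
  then obtain K where K: "\<And>k. k \<ge> K \<Longrightarrow> a (Suc k) \<le> a k - e / 2"
    unfolding eventually_sequentially by blast
  have linear_decrease: "a (K + n) \<le> a K - real n * (e / 2)" for n
  proof (induction n)
    case (Suc n)
    have "a (K + Suc n) \<le> a (K + n) - e / 2" using K[of "K + n"] by simp
    with Suc show ?case by (simp only: of_nat_Suc distrib_right)
  qed simp
  obtain n where "real n > (a K - m) / (e / 2)" using reals_Archimedean2 by blast
  then have "real n * (e / 2) > a K - m" using \<open>e > 0\<close> by (simp add: divide_simps)
  with linear_decrease[of n] bounded[of "K + n"] show False by linarith
qed

lemma liminf_eq_0_if_frequently_small:
  fixes u :: "nat \<Rightarrow> real"
  assumes "\<And>k. u k \<ge> 0" and small: "\<And>e. e > 0 \<Longrightarrow> frequently (\<lambda>k. u k < e) sequentially"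
  shows "liminf (\<lambda>k. ereal (u k)) = 0"
proof (rule antisym)
  show "liminf (\<lambda>k. ereal (u k)) \<le> 0"
  proof (rule ereal_le_epsilon2)
    fix e :: real
    assume "e > 0"
    show "liminf (\<lambda>k. ereal (u k)) \<le> 0 + ereal e"
    proof (rule ccontr)
      assume "\<not> ?thesis"
      then have "eventually (\<lambda>k. ereal e < ereal (u k)) sequentially"
        by (intro less_LiminfD) simp
      from frequently_ex[OF frequently_eventually_frequently[OF small[OF \<open>e > 0\<close>] this]]
      show False by auto
    qed
  qed
  show "0 \<le> liminf (\<lambda>k. ereal (u k))"
    using assms(1) by (intro Liminf_bounded) simp
qed

lemma running_Min_tendsto_0:
  fixes u :: "nat \<Rightarrow> real"
  assumes "\<And>k. u k \<ge> 0" and small: "\<And>e. e > 0 \<Longrightarrow> \<exists>k. u k < e"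
  shows "(\<lambda>T. Min (u ` {..<T})) \<longlonglongrightarrow> 0"
proof (rule metric_LIMSEQ_I)
  fix e :: real
  assume "e > 0"
  then obtain k where "u k < e" using small by blast
  have "dist (Min (u ` {..<T})) 0 < e" if "T \<ge> Suc k" for T
  proof -
    have "k \<in> {..<T}" using that by simp
    then have "Min (u ` {..<T}) \<le> u k" "0 \<le> Min (u ` {..<T})"
      using assms(1) by (simp, subst Min_ge_iff, auto)
    with \<open>u k < e\<close> show ?thesis by (simp add: dist_real_def)
  qed
  then show "\<exists>T0. \<forall>T\<ge>T0. dist (Min (u ` {..<T})) 0 < e" by blast
qed

locale nonmonotone_backtracking =
  fixes f :: "'a::real_inner \<Rightarrow> real" and g :: "'a \<Rightarrow> 'a"
    and x d :: "nat \<Rightarrow> 'a" and \<alpha> :: "nat \<Rightarrow> real"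
    and \<nu> :: "nat \<Rightarrow> nat \<Rightarrow> real" and l :: "nat \<Rightarrow> nat"
    and \<beta> \<rho> L f_low c1 c2 :: real
  assumes grad: "\<And>y. (f has_derivative (\<lambda>h. inner (g y) h)) (at y)"
    and \<beta>: "0 < \<beta>" "\<beta> < 1" and \<rho>: "0 < \<rho>" "\<rho> < 1"
    and initial_trial: "\<alpha> 0 > 0"
    and nu_nonneg: "\<And>k j. \<nu> k j \<ge> 0"
    and accept: "\<And>k. f (x k + (\<alpha> k * \<beta> ^ l k) *\<^sub>R d k)
                   \<le> f (x k) + \<rho> * \<alpha> k * \<beta> ^ l k * inner (g (x k)) (d k) + \<nu> k (l k)"
    and first: "\<And>k j. j < l k \<Longrightarrow> \<not> (f (x k + (\<alpha> k * \<beta> ^ j) *\<^sub>R d k)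
                   \<le> f (x k) + \<rho> * \<alpha> k * \<beta> ^ j * inner (g (x k)) (d k) + \<nu> k j)"
    and step: "\<And>k. x (Suc k) = x k + (\<alpha> k * \<beta> ^ l k) *\<^sub>R d k"
    and stepsize: "\<And>k. \<alpha> (Suc k) = \<alpha> k * \<beta> powi (int (l k) - 1)"
    and lipschitz: "L > 0" "L-lipschitz_on UNIV g"
    and bounded_below: "\<And>y. f y \<ge> f_low"
    and c1: "c1 > 0" and c2: "c2 > 0"
    and angle: "\<And>k. inner (g (x k)) (d k) \<le> - c1 * (norm (g (x k)))\<^sup>2"
    and length: "\<And>k. norm (d k) \<le> c2 * norm (g (x k))"
begin

lemma next_trial: "\<alpha> (Suc k) = \<alpha> k * \<beta> ^ l k / \<beta>"
  using stepsize[of k] \<beta> by (simp add: power_int_diff power_int_of_nat)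

lemma trial_pos: "\<alpha> k > 0"
  by (induction k) (use initial_trial \<beta> in \<open>simp_all add: next_trial\<close>)

lemma accepted_step_gt_if_backtracked:
  assumes "0 < l k"
  shows "\<beta> * ((1 - \<rho>) * c1 / (L * c2\<^sup>2)) < \<alpha> k * \<beta> ^ l k"
proof -
  let ?s = "\<alpha> k * \<beta> ^ (l k - 1)"
  have "?s > 0" using trial_pos[of k] \<beta> by simp
  have "\<not> f (x k + ?s *\<^sub>R d k) \<le> f (x k) + \<rho> * ?s * inner (g (x k)) (d k)"
    using first[of "l k - 1" k] assms nu_nonneg[of k "l k - 1"] by (simp add: mult.assoc)
  moreover have "f (x k + ?s *\<^sub>R d k) \<le> f (x k) + \<rho> * ?s * inner (g (x k)) (d k)"
    if "?s \<le> (1 - \<rho>) * c1 / (L * c2\<^sup>2)"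
    by (rule armijo_condition_for_short_steps[OF grad lipschitz(2,1) \<rho>(2) c2 \<open>?s > 0\<close> that
          angle length])
  ultimately have "(1 - \<rho>) * c1 / (L * c2\<^sup>2) < ?s" by (meson not_le)
  then have "\<beta> * ((1 - \<rho>) * c1 / (L * c2\<^sup>2)) < \<beta> * ?s"
    using \<beta> by (intro mult_strict_left_mono) simp_all
  moreover have "\<alpha> k * \<beta> ^ l k = \<beta> * ?s"
    using assms by (cases "l k") (simp_all add: ac_simps)
  ultimately show ?thesis by (simp only:)
qed

lemma accepted_step_lower_bound:
  "min (\<alpha> 0) (\<beta> * ((1 - \<rho>) * c1 / (L * c2\<^sup>2))) \<le> \<alpha> k * \<beta> ^ l k"
  using lipschitz(1) \<rho>(2) c1 c2
  by (intro backtracking_steps_bounded_below[OF \<beta> initial_trial _ next_trial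
        accepted_step_gt_if_backtracked]) simp_all

lemma sufficient_decrease:
  defines "\<kappa> \<equiv> \<rho> * min (\<alpha> 0) (\<beta> * ((1 - \<rho>) * c1 / (L * c2\<^sup>2))) * c1"
  shows "f (x (Suc k)) \<le> f (x k) - \<kappa> * (norm (g (x k)))\<^sup>2 + \<nu> k (l k)"
proof -
  have "\<kappa> * (norm (g (x k)))\<^sup>2 \<le> \<rho> * (\<alpha> k * \<beta> ^ l k) * c1 * (norm (g (x k)))\<^sup>2"
    unfolding \<kappa>_def using accepted_step_lower_bound \<rho> c1
    by (intro mult_right_mono mult_left_mono) auto
  also have "\<dots> = \<rho> * (\<alpha> k * \<beta> ^ l k) * (c1 * (norm (g (x k)))\<^sup>2)"
    by (simp only: mult.assoc)
  also have "\<dots> \<le> \<rho> * (\<alpha> k * \<beta> ^ l k) * (- inner (g (x k)) (d k))"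
    using angle[of k] trial_pos[of k] \<beta> \<rho> by (intro mult_left_mono) auto
  finally show ?thesis
    using accept[of k] unfolding step[of k, symmetric] by (simp add: mult.assoc)
qed

lemma gradient_frequently_small:
  assumes "(\<lambda>k. \<nu> k (l k)) \<longlonglongrightarrow> 0" and "e > 0"
  shows "frequently (\<lambda>k. norm (g (x k)) < e) sequentially"
proof -
  define \<kappa> where "\<kappa> = \<rho> * min (\<alpha> 0) (\<beta> * ((1 - \<rho>) * c1 / (L * c2\<^sup>2))) * c1"
  have "\<kappa> > 0" using initial_trial \<beta> \<rho> lipschitz(1) c1 c2 by (simp add: \<kappa>_def)
  have "frequently (\<lambda>k. \<kappa> * (norm (g (x k)))\<^sup>2 < \<kappa> * e\<^sup>2) sequentially"
    using \<open>\<kappa> > 0\<close> \<open>e > 0\<close>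
    by (intro frequently_small_if_descent_bounded_below[where a = "\<lambda>k. f (x k)"
          and \<nu> = "\<lambda>k. \<nu> k (l k)", OF sufficient_decrease[folded \<kappa>_def] assms(1) bounded_below])
      simp
  then show ?thesis
  proof (rule frequently_elim1)
    fix k
    assume "\<kappa> * (norm (g (x k)))\<^sup>2 < \<kappa> * e\<^sup>2"
    then have "(norm (g (x k)))\<^sup>2 < e\<^sup>2" using \<open>\<kappa> > 0\<close> by simp
    then show "norm (g (x k)) < e" by (rule power2_less_imp_less) (use \<open>e > 0\<close> in simp)
  qed
qed

end

theorem theorem3:
  fixes f :: "'a::{real_inner, complete_space} \<Rightarrow> real"
    and g :: "'a \<Rightarrow> 'a"
    and x d :: "nat \<Rightarrow> 'a"
    and \<alpha> :: "nat \<Rightarrow> real"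
    and \<nu> :: "nat \<Rightarrow> nat \<Rightarrow> real"
    and l :: "nat \<Rightarrow> nat"
    and x0 :: 'a and \<alpha>0 \<beta> \<rho> L f_low c1 c2 :: real
  assumes grad: "\<And>y. (f has_derivative (\<lambda>h. inner (g y) h)) (at y)"
    and params: "\<alpha>0 > 0" "0 < \<beta>" "\<beta> < 1" "0 < \<rho>" "\<rho> < 1"
    and init: "x 0 = x0" "\<alpha> 0 = \<alpha>0"
    and descent: "\<And>k. inner (g (x k)) (d k) < 0"
    and nu_nonneg: "\<And>k j. \<nu> k j \<ge> 0"
    and accept: "\<And>k. f (x k + (\<alpha> k * \<beta> ^ l k) *\<^sub>R d k)
                   \<le> f (x k) + \<rho> * \<alpha> k * \<beta> ^ l k * inner (g (x k)) (d k) + \<nu> k (l k)"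
    and first: "\<And>k j. j < l k \<Longrightarrow> \<not> (f (x k + (\<alpha> k * \<beta> ^ j) *\<^sub>R d k)
                   \<le> f (x k) + \<rho> * \<alpha> k * \<beta> ^ j * inner (g (x k)) (d k) + \<nu> k j)"
    and step: "\<And>k. x (Suc k) = x k + (\<alpha> k * \<beta> ^ l k) *\<^sub>R d k"
    and stepsize: "\<And>k. \<alpha> (Suc k) = \<alpha> k * \<beta> powi (int (l k) - 1)"
    and A1: "L > 0" "L-lipschitz_on UNIV g"
    and A2: "\<And>y. f y \<ge> f_low"
    and A3: "c1 > 0" "c2 > 0"
      "\<And>k. inner (g (x k)) (d k) \<le> - c1 * (norm (g (x k)))\<^sup>2"
      "\<And>k. norm (d k) \<le> c2 * norm (g (x k))"
    and nu_lim: "(\<lambda>k. \<nu> k (l k)) \<longlonglongrightarrow> 0"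
  shows "(\<exists>k. g (x k) = 0) \<or>
         (liminf (\<lambda>k. ereal (norm (g (x k)))) = 0 \<and>
          (\<lambda>T. Min ((\<lambda>k. norm (g (x k))) ` {..<T})) \<longlonglongrightarrow> 0)"
proof -
  interpret nonmonotone_backtracking f g x d \<alpha> \<nu> l \<beta> \<rho> L f_low c1 c2
    using grad params init nu_nonneg accept first step stepsize A1 A2 A3
    by unfold_locales simp_all
  have small: "frequently (\<lambda>k. norm (g (x k)) < e) sequentially" if "e > 0" for e
    using gradient_frequently_small[OF nu_lim that] .
  have "liminf (\<lambda>k. ereal (norm (g (x k)))) = 0"
    by (rule liminf_eq_0_if_frequently_small) (simp_all add: small)
  moreover have "(\<lambda>T. Min ((\<lambda>k. norm (g (x k))) ` {..<T})) \<longlonglongrightarrow> 0"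
    by (rule running_Min_tendsto_0) (simp, use small frequently_ex in blast)
  ultimately show ?thesis by blast
qed

end
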